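(* Let $q\in(0,1]$. Consider the parametric convex semi-infinite problem described in the context, let $((\bar c,\bar b),\bar x)\in\operatorname{gph}\mathcal{S}$, and assume that $P(\bar c,\bar b)$ satisfies the Slater condition. Suppose that $\mathcal{L}$ is not $q$-order calm at $((f(\bar x)+\langle\bar c,\bar x\rangle,\bar b),\bar x)\in\operatorname{gph}\mathcal{L}$. Then there exist sequences $(x^r)_{r\in\mathbb{N}}\subset\mathbb{R}^n$ converging to $\bar x$ and $(b^r)_{r\in\mathbb{N}}\subset\mathcal{C}(T,\mathbb{R})$ converging to $\bar b$ (in $\|\cdot\|_\infty$) such that $$x^r\in\mathcal{F}(b^r)\ \text{for all } r,\qquad \lim_{r\to+\infty}\frac{\|b^r-\bar b\|_\infty^q}{d(x^r,\mathcal{S}_{\bar c}(\bar b))}=0,$$ as well as a finite set $T_0\subset T$ with $T_0\subset T_{b^r}(x^r)$ for all $r$, numbers $\gamma_t>0$ and vectors $u_t\in\partial g_t(\bar x)$ ($t\in T_0$), and $u\in\partial f(\bar x)$, satisfying $$-(\bar c+u)=\sum_{t\in T_0}\gamma_t u_t.$$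
   Context: Setting: $T$ is a compact subset of a metric space $Z$ with $T\neq Z$; $f:\mathbb{R}^n\to\mathbb{R}$ and $g_t:\mathbb{R}^n\to\mathbb{R}$ ($t\in T$) are convex, with $(t,x)\mapsto g_t(x)$ continuous on $T\times\mathbb{R}^n$. $\mathcal{C}(T,\mathbb{R})$ is the space of continuous $b:T\to\mathbb{R}$, $t\mapsto b_t$, with $\|b\|_\infty=\max_t|b_t|$. For $(c,b)\in\mathbb{R}^n\times\mathcal{C}(T,\mathbb{R})$, $P(c,b)$: minimize $f(x)+\langle c,x\rangle$ subject to $g_t(x)\le b_t$, $t\in T$; $\mathcal{S}(c,b)$ is its optimal solution set, $\mathcal{S}_c(b):=\mathcal{S}(c,b)$, $\mathcal{F}(b)=\{x:g_t(x)\le b_t,\ t\in T\}$, $T_b(x)=\{t\in T:g_t(x)=b_t\}$. Slater condition: some $\hat x$ has $g_t(\hat x)<\bar b_t$ for all $t$. $\mathcal{L}(\alpha,b)=\{x: f(x)+\langle\bar c,x\rangle\le\alpha,\ g_t(x)\le b_t,\ t\in T\}$ on $\mathbb{R}\times\mathcal{C}(T,\mathbb{R})$ normed by $\max\{|\alpha|,\|b\|_\infty\}$. $\partial$ is the convex subdifferential; distances are Euclidean. A set-valued $S:Y\rightrightarrows X$ between metric spaces is $q$-order calm at $(\bar y,\bar x)\in\operatorname{gph}S$ if there exist $\tau>0$ and neighbourhoods $U$ of $\bar x$, $V$ of $\bar y$ with $\tau\,d(x,S(\bar y))\le d(y,\bar y)^q$ for all $y\in V$, $x\in S(y)\cap U$.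 *)

theory Defs
  imports "HOL-Analysis.Analysis"
begin

text \<open>Supremum-norm distance on C(T,R); for continuous functions on a compact nonempty T
  this is max over t in T of the absolute difference (the 0 only matters if T is empty).\<close>
definition supdist :: "'z set \<Rightarrow> ('z \<Rightarrow> real) \<Rightarrow> ('z \<Rightarrow> real) \<Rightarrow> real" where
  "supdist T b b' = Sup (insert 0 ((\<lambda>t. \<bar>b t - b' t\<bar>) ` T))"

definition subdiff :: "('a::real_inner \<Rightarrow> real) \<Rightarrow> 'a \<Rightarrow> 'a set" where
  "subdiff h x = {u. \<forall>y. h x + inner u (y - x) \<le> h y}"

definition feas :: "'z set \<Rightarrow> ('z \<Rightarrow> 'a \<Rightarrow> real) \<Rightarrow> ('z \<Rightarrow> real) \<Rightarrow> 'a set" where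
  "feas T g b = {x. \<forall>t\<in>T. g t x \<le> b t}"

definition solset :: "('a::real_inner \<Rightarrow> real) \<Rightarrow> 'z set \<Rightarrow> ('z \<Rightarrow> 'a \<Rightarrow> real)
    \<Rightarrow> 'a \<Rightarrow> ('z \<Rightarrow> real) \<Rightarrow> 'a set" where
  "solset f T g c b = {x \<in> feas T g b. \<forall>y\<in>feas T g b. f x + inner c x \<le> f y + inner c y}"

definition active :: "'z set \<Rightarrow> ('z \<Rightarrow> 'a \<Rightarrow> real) \<Rightarrow> ('z \<Rightarrow> real) \<Rightarrow> 'a \<Rightarrow> 'z set" where
  "active T g b x = {t\<in>T. g t x = b t}"

definition levelmap :: "('a::real_inner \<Rightarrow> real) \<Rightarrow> 'z set \<Rightarrow> ('z \<Rightarrow> 'a \<Rightarrow> real)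
    \<Rightarrow> 'a \<Rightarrow> real \<times> ('z \<Rightarrow> real) \<Rightarrow> 'a set" where
  "levelmap f T g c p = {x. f x + inner c x \<le> fst p \<and> x \<in> feas T g (snd p)}"

definition pdist :: "'z set \<Rightarrow> real \<times> ('z \<Rightarrow> real) \<Rightarrow> real \<times> ('z \<Rightarrow> real) \<Rightarrow> real" where
  "pdist T p p' = max \<bar>fst p - fst p'\<bar> (supdist T (snd p) (snd p'))"

definition q_calm :: "'y set \<Rightarrow> ('y \<Rightarrow> 'y \<Rightarrow> real) \<Rightarrow> ('y \<Rightarrow> 'x::metric_space set)
    \<Rightarrow> real \<Rightarrow> 'y \<Rightarrow> 'x \<Rightarrow> bool" where
  "q_calm Ydom dY S q ybar xbar \<longleftrightarrow>
     (\<exists>\<tau>>0. \<exists>U. open U \<and> xbar \<in> U \<and> (\<exists>\<delta>>0. \<forall>y\<in>Ydom. dY y ybar < \<delta> \<longrightarrow>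
        (\<forall>x \<in> S y \<inter> U. \<tau> * infdist x (S ybar) \<le> dY y ybar powr q)))"

end

theory Submission
  imports Defs
begin

text \<open>
  Under the Slater condition the minimiser \<open>xbar\<close> carries KKT multipliers: finitely many
  active indices \<open>T0\<close>, weights \<open>\<gamma> t > 0\<close> and subgradients \<open>ut t \<in> \<partial>g t xbar\<close>,
  \<open>u \<in> \<partial>f xbar\<close> with \<open>- (cbar + u) = (\<Sum>t\<in>T0. \<gamma> t *\<^sub>R ut t)\<close>. Otherwise a Gordan-type
  alternative, applied to the compact convex set \<open>cbar + \<partial>f xbar\<close> and to the compact set of
  active subgradients (which the Slater point keeps in an open half-space), produces a direction
  along which the objective strictly decreases while, uniformly over the compact index set,
  all constraints remain satisfied; this contradicts optimality.

  Failure of calmness supplies \<open>X k \<in> L (\<alpha> k, b k)\<close> with \<open>X \<longlonglongrightarrow> xbar\<close>, parameter distance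
  \<open>\<rho> k < 1 / (k + 1)\<close> and \<open>\<rho> k powr q < d (X k, S) / (k + 1)\<close>. Pairing the KKT identity with
  \<open>X k - xbar\<close> bounds \<open>\<Sum>t\<in>T0. \<gamma> t * (bbar t - g t (X k))\<close> by \<open>\<rho> k\<close>, hence every slack
  \<open>bbar t - g t (X k)\<close>, \<open>t \<in> T0\<close>, by \<open>K * \<rho> k\<close>. The right-hand side
  \<open>br k t = max (g t (X k)) (bbar t - K * \<rho> k)\<close> is therefore continuous, keeps \<open>X k\<close> feasible
  with \<open>T0\<close> active, and lies within \<open>K * \<rho> k\<close> of \<open>bbar\<close>.
\<close>

section \<open>Subgradients of convex functions\<close>

lemma convex_strict_epigraph:
  fixes h :: "'a::real_vector \<Rightarrow> real"
  assumes "convex_on UNIV h"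
  shows "convex {p. h (fst p) < snd p}"
proof (rule convexI, clarsimp)
  fix a b :: 'a and ra rb u v :: real
  assume lt: "h a < ra" "h b < rb" and uv: "0 \<le> u" "0 \<le> v" "u + v = 1"
  have "h (u *\<^sub>R a + v *\<^sub>R b) \<le> u * h a + v * h b"
    using assms uv unfolding convex_on_def by blast
  also have "\<dots> < u * ra + v * rb"
    using lt uv by (smt (verit) mult_left_mono mult_strict_left_mono)
  finally show "h (u *\<^sub>R a + v *\<^sub>R b) < u * ra + v * rb" .
qed

lemma supporting_hyperplane_strict_epigraph:
  fixes h :: "'a::euclidean_space \<Rightarrow> real"
  assumes h: "convex_on UNIV h"
  shows "\<exists>a \<beta>. (a, \<beta>) \<noteq> 0 \<and> (\<forall>y r. h y < r \<longrightarrow> inner a (y - x) + \<beta> * (r - h x) \<le> 0)"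
proof -
  have "(x, h x + 1) \<in> {p. h (fst p) < snd p}"
    by simp
  then have ne: "{p. h (fst p) < snd p} \<noteq> {}"
    by blast
  have disj: "{p. h (fst p) < snd p} \<inter> {(x, h x)} = {}"
    by auto
  obtain n k where "n \<noteq> 0" and below: "\<forall>p\<in>{p. h (fst p) < snd p}. inner n p \<le> k"
    and "\<forall>p\<in>{(x, h x)}. k \<le> inner n p"
    using separating_hyperplane_sets[OF convex_strict_epigraph[OF h] convex_singleton ne
        insert_not_empty disj] by blast
  then have above: "k \<le> inner n (x, h x)"
    by simp
  have "inner (fst n) (y - x) + snd n * (r - h x) \<le> 0" if "h y < r" for y r
    using below[rule_format, of "(y, r)"] above that
    by (cases n) (simp add: algebra_simps)
  then show ?thesis
    using \<open>n \<noteq> 0\<close> by (intro exI[of _ "fst n"] exI[of _ "snd n"]) simp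
qed

lemma subdiff_nonempty:
  fixes h :: "'a::euclidean_space \<Rightarrow> real"
  assumes h: "convex_on UNIV h"
  shows "subdiff h x \<noteq> {}"
proof -
  obtain a \<beta> where nz: "(a, \<beta>) \<noteq> 0"
    and sep: "\<And>y r. h y < r \<Longrightarrow> inner a (y - x) + \<beta> * (r - h x) \<le> 0"
    using supporting_hyperplane_strict_epigraph[OF h] by blast
  have "\<beta> \<le> 0"
    using sep[of x "h x + 1"] by simp
  moreover have "\<beta> \<noteq> 0"
  proof
    assume "\<beta> = 0"
    then have "inner a a \<le> 0"
      using sep[of "x + a" "h (x + a) + 1"] by simp
    then have "inner a a = 0"
      using inner_ge_zero[of a] by (rule order.antisym)
    then show False
      using nz \<open>\<beta> = 0\<close> by (simp add: zero_prod_def)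
  qed
  ultimately have "\<beta> < 0" by simp
  have "(1 / - \<beta>) *\<^sub>R a \<in> subdiff h x"
    unfolding subdiff_def
  proof (intro CollectI allI)
    fix y
    have "h x + inner a (y - x) / - \<beta> \<le> r" if "h y < r" for r
      using sep[OF that] \<open>\<beta> < 0\<close> by (simp add: field_simps)
    then have "h x + inner a (y - x) / - \<beta> \<le> h y"
      by (rule dense_ge)
    then show "h x + inner ((1 / - \<beta>) *\<^sub>R a) (y - x) \<le> h y"
      by simp
  qed
  then show ?thesis by blast
qed

lemma norm_subdiff_le:
  fixes h :: "'a::real_inner \<Rightarrow> real"
  assumes w: "w \<in> subdiff h y" and B: "\<forall>z\<in>cball y 1. \<bar>h z\<bar> \<le> B"
  shows "norm w \<le> 2 * B"
proof (cases "w = 0")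
  case True
  have "\<bar>h y\<bar> \<le> B"
    using B by simp
  then show ?thesis
    using True by simp
next
  case False
  define z where "z = y + (1 / norm w) *\<^sub>R w"
  have "z \<in> cball y 1"
    using False by (simp add: z_def dist_norm)
  then have "\<bar>h z\<bar> \<le> B" "\<bar>h y\<bar> \<le> B"
    using B by auto
  moreover have "inner w (z - y) = norm w"
    using False by (simp add: z_def dot_square_norm power2_eq_square)
  moreover have "h y + inner w (z - y) \<le> h z"
    using w unfolding subdiff_def by blast
  ultimately show ?thesis
    by linarith
qed

lemma subdiff_eq_Inter_halfspaces:
  "subdiff h x = (\<Inter>y. {u. inner (y - x) u \<le> h y - h x})"
  unfolding subdiff_def by (auto simp: inner_commute algebra_simps)

lemma convex_subdiff: "convex (subdiff h x)"
  unfolding subdiff_eq_Inter_halfspaces by (simp add: convex_INT convex_halfspace_le)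

lemma closed_subdiff: "closed (subdiff h x)"
  unfolding subdiff_eq_Inter_halfspaces by (simp add: closed_INT closed_halfspace_le)

lemma compact_subdiff:
  fixes h :: "'a::euclidean_space \<Rightarrow> real"
  assumes "convex_on UNIV h"
  shows "compact (subdiff h x)"
proof -
  have "compact (h ` cball x 1)"
    using convex_on_continuous[OF open_UNIV assms]
    by (intro compact_continuous_image) (auto intro: continuous_on_subset)
  then obtain B where "\<forall>v\<in>h ` cball x 1. \<bar>v\<bar> \<le> B"
    using compact_imp_bounded bounded_real by blast
  then have "\<forall>z\<in>cball x 1. \<bar>h z\<bar> \<le> B"
    by blast
  then have "bounded (subdiff h x)"
    using norm_subdiff_le unfolding bounded_iff by blast
  then show ?thesis
    using closed_subdiff by (simp add: compact_eq_bounded_closed)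
qed

lemma subdiff_diff_const: "subdiff (\<lambda>x. h x - a) x = subdiff h x"
  unfolding subdiff_def by auto

lemma subdiff_add_inner: "w \<in> subdiff (\<lambda>y. h y + inner c y) x \<longleftrightarrow> w - c \<in> subdiff h x"
  unfolding subdiff_def by (simp add: inner_commute algebra_simps)

section \<open>Uniform descent over a compact family of convex functions\<close>

lemma bounded_on_compact_times_cball:
  fixes G :: "'i::metric_space \<Rightarrow> 'a::euclidean_space \<Rightarrow> real"
  assumes "compact I" and "continuous_on (I \<times> UNIV) (\<lambda>(i, x). G i x)"
  shows "\<exists>B. \<forall>i\<in>I. \<forall>z\<in>cball x0 R. \<bar>G i z\<bar> \<le> B"
proof -
  have "compact ((\<lambda>(i, x). G i x) ` (I \<times> cball x0 R))"
    using assms by (intro compact_continuous_image compact_Times)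
      (auto intro: continuous_on_subset)
  then obtain B where "\<forall>v\<in>(\<lambda>(i, x). G i x) ` (I \<times> cball x0 R). \<bar>v\<bar> \<le> B"
    using compact_imp_bounded bounded_real by blast
  then show ?thesis
    by force
qed

lemma subdiff_family_bounded:
  fixes G :: "'i::metric_space \<Rightarrow> 'a::euclidean_space \<Rightarrow> real"
  assumes "compact I" and "continuous_on (I \<times> UNIV) (\<lambda>(i, x). G i x)"
  shows "\<exists>L. \<forall>i\<in>I. \<forall>y\<in>cball x0 R. \<forall>w\<in>subdiff (G i) y. norm w \<le> L"
proof -
  obtain B where B: "\<forall>i\<in>I. \<forall>z\<in>cball x0 (R + 1). \<bar>G i z\<bar> \<le> B"
    using bounded_on_compact_times_cball[OF assms] by blast
  have "norm w \<le> 2 * B" if "i \<in> I" "y \<in> cball x0 R" "w \<in> subdiff (G i) y" for i y w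
  proof (rule norm_subdiff_le[OF that(3)], intro ballI)
    fix z assume "z \<in> cball y 1"
    then have "dist x0 z \<le> R + 1"
      using that(2) dist_triangle[of x0 z y] by (simp add: dist_commute)
    then show "\<bar>G i z\<bar> \<le> B"
      using B that(1) by simp
  qed
  then show ?thesis
    by blast
qed

lemma tendsto_family_apply:
  assumes "continuous_on (I \<times> UNIV) (\<lambda>(i, x). G i x)"
    and "\<forall>k. i k \<in> I" and "i \<longlonglongrightarrow> i0" and "i0 \<in> I" and "y \<longlonglongrightarrow> y0"
  shows "(\<lambda>k. G (i k) (y k)) \<longlonglongrightarrow> G i0 y0"
  using continuous_on_tendsto_compose[OF assms(1) tendsto_Pair[OF assms(3,5)]] assms(2,4)
  by simp

lemma subdiff_family_limit:
  fixes G :: "'i::metric_space \<Rightarrow> 'a::euclidean_space \<Rightarrow> real"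
  assumes I: "compact I" and Gc: "continuous_on (I \<times> UNIV) (\<lambda>(i, x). G i x)"
    and i: "\<forall>k. i k \<in> I" and y: "y \<longlonglongrightarrow> x0" and wb: "\<forall>k. norm (w k) \<le> L"
    and ws: "\<forall>k. w k \<in> subdiff (G (i k)) (y k)"
  obtains i0 w0 r where "i0 \<in> I" "strict_mono r" "(i \<circ> r) \<longlonglongrightarrow> i0" "(w \<circ> r) \<longlonglongrightarrow> w0"
    "w0 \<in> subdiff (G i0) x0"
proof -
  have "seq_compact (I \<times> cball (0::'a) L)"
    using I by (intro compact_imp_seq_compact compact_Times) auto
  moreover have "\<forall>k. (i k, w k) \<in> I \<times> cball 0 L"
    using i wb by simp
  ultimately obtain l r where "l \<in> I \<times> cball 0 L" and r: "strict_mono r"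
    and "((\<lambda>k. (i k, w k)) \<circ> r) \<longlonglongrightarrow> l"
    by (rule seq_compactE)
  then obtain i0 w0 where i0: "i0 \<in> I" and lim: "((\<lambda>k. (i k, w k)) \<circ> r) \<longlonglongrightarrow> (i0, w0)"
    by (cases l) auto
  have il: "(i \<circ> r) \<longlonglongrightarrow> i0" and wl: "(w \<circ> r) \<longlonglongrightarrow> w0"
    using tendsto_fst[OF lim] tendsto_snd[OF lim] by (simp_all add: comp_def)
  have yl: "(y \<circ> r) \<longlonglongrightarrow> x0"
    using LIMSEQ_subseq_LIMSEQ[OF y r] .
  have "G i0 x0 + inner w0 (z - x0) \<le> G i0 z" for z
  proof (rule LIMSEQ_le)
    show "(\<lambda>k. G ((i \<circ> r) k) ((y \<circ> r) k) + inner ((w \<circ> r) k) (z - (y \<circ> r) k))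
        \<longlonglongrightarrow> G i0 x0 + inner w0 (z - x0)"
      using i by (intro tendsto_intros tendsto_family_apply[OF Gc _ il i0 yl] wl yl) simp
    show "(\<lambda>k. G ((i \<circ> r) k) z) \<longlonglongrightarrow> G i0 z"
      using i by (intro tendsto_family_apply[OF Gc _ il i0 tendsto_const]) simp
    show "\<exists>N. \<forall>k\<ge>N. G ((i \<circ> r) k) ((y \<circ> r) k) + inner ((w \<circ> r) k) (z - (y \<circ> r) k)
        \<le> G ((i \<circ> r) k) z"
      using ws unfolding subdiff_def by auto
  qed
  then show ?thesis
    using that i0 r il wl unfolding subdiff_def by blast
qed

lemma nonneg_along_ray_imp_active_ascent:
  fixes G :: "'i::metric_space \<Rightarrow> 'a::euclidean_space \<Rightarrow> real"
  assumes I: "compact I" and Gc: "continuous_on (I \<times> UNIV) (\<lambda>(i, x). G i x)"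
    and Gconv: "\<forall>i\<in>I. convex_on UNIV (G i)" and Gle: "\<forall>i\<in>I. G i x0 \<le> 0"
    and s: "\<And>k. 0 < s k" "\<And>k. s k \<le> 1" "s \<longlonglongrightarrow> 0"
    and i: "\<And>k. i k \<in> I" and nonneg: "\<And>k. 0 \<le> G (i k) (x0 + s k *\<^sub>R e)"
  obtains i0 w0 where "i0 \<in> I" "G i0 x0 = 0" "w0 \<in> subdiff (G i0) x0" "0 \<le> inner w0 e"
proof -
  define y where "y k = x0 + s k *\<^sub>R e" for k
  have y: "y \<longlonglongrightarrow> x0"
    unfolding y_def using tendsto_add[OF tendsto_const tendsto_scaleR[OF s(3) tendsto_const]] by simp
  have "\<forall>k. \<exists>w. w \<in> subdiff (G (i k)) (y k)"
    using subdiff_nonempty Gconv i by blast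
  then obtain w where w: "\<And>k. w k \<in> subdiff (G (i k)) (y k)"
    by metis
  obtain L where "\<forall>i\<in>I. \<forall>y\<in>cball x0 (norm e). \<forall>w\<in>subdiff (G i) y. norm w \<le> L"
    using subdiff_family_bounded[OF I Gc] by blast
  moreover have "y k \<in> cball x0 (norm e)" for k
    using s(1,2)[of k] by (simp add: y_def dist_norm mult_left_le_one_le)
  ultimately have wL: "\<forall>k. norm (w k) \<le> L"
    using i w by blast
  have slope: "- G (i k) x0 \<le> s k * inner (w k) e" and ascent: "0 \<le> inner (w k) e" for k
  proof -
    have "G (i k) (y k) + inner (w k) (x0 - y k) \<le> G (i k) x0"
      using w[of k] unfolding subdiff_def by blast
    then show "- G (i k) x0 \<le> s k * inner (w k) e"
      using nonneg[of k] by (simp add: y_def)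
    then show "0 \<le> inner (w k) e"
      using Gle i[of k] s(1)[of k] by (smt (verit) zero_le_mult_iff)
  qed
  obtain i0 w0 r where i0: "i0 \<in> I" and r: "strict_mono r" and il: "(i \<circ> r) \<longlonglongrightarrow> i0"
    and wl: "(w \<circ> r) \<longlonglongrightarrow> w0" and w0: "w0 \<in> subdiff (G i0) x0"
    using subdiff_family_limit[OF I Gc _ y wL] i w by metis
  have "- G i0 x0 \<le> 0 * inner w0 e"
  proof (rule LIMSEQ_le)
    show "(\<lambda>k. - G ((i \<circ> r) k) x0) \<longlonglongrightarrow> - G i0 x0"
      using i by (intro tendsto_minus tendsto_family_apply[OF Gc _ il i0 tendsto_const]) simp
    show "(\<lambda>k. (s \<circ> r) k * inner ((w \<circ> r) k) e) \<longlonglongrightarrow> 0 * inner w0 e"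
      by (intro tendsto_intros LIMSEQ_subseq_LIMSEQ[OF s(3) r] wl)
  qed (use slope in simp)
  then have "G i0 x0 = 0"
    using Gle i0 by force
  moreover have "0 \<le> inner w0 e"
    by (rule LIMSEQ_le_const[OF tendsto_inner[OF wl tendsto_const]]) (use ascent in simp)
  ultimately show ?thesis
    using that i0 w0 by blast
qed

lemma uniform_descent:
  fixes G :: "'i::metric_space \<Rightarrow> 'a::euclidean_space \<Rightarrow> real"
  assumes I: "compact I" and Gc: "continuous_on (I \<times> UNIV) (\<lambda>(i, x). G i x)"
    and Gconv: "\<forall>i\<in>I. convex_on UNIV (G i)" and Gle: "\<forall>i\<in>I. G i x0 \<le> 0"
    and Gact: "\<forall>i\<in>I. G i x0 = 0 \<longrightarrow> (\<forall>w\<in>subdiff (G i) x0. inner w e < 0)"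
  shows "\<exists>\<delta>>0. \<forall>s. 0 < s \<and> s < \<delta> \<longrightarrow> (\<forall>i\<in>I. G i (x0 + s *\<^sub>R e) < 0)"
proof (rule ccontr)
  assume "\<not> ?thesis"
  then have "\<exists>s i. 0 < s \<and> s < inverse (real (Suc k)) \<and> i \<in> I \<and> 0 \<le> G i (x0 + s *\<^sub>R e)" for k
    by (meson inverse_positive_iff_positive of_nat_0_less_iff zero_less_Suc not_le)
  then obtain s i where s: "\<And>k. 0 < s k" "\<And>k. s k < inverse (real (Suc k))"
    and i: "\<And>k. i k \<in> I" and nonneg: "\<And>k. 0 \<le> G (i k) (x0 + s k *\<^sub>R e)"
    by metis
  have s_le: "s k \<le> 1" for k
    using s(2)[of k] inverse_le_1_iff[of "real (Suc k)"] by simp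
  have s0: "s \<longlonglongrightarrow> 0"
    by (rule real_tendsto_sandwich[OF _ _ tendsto_const LIMSEQ_inverse_real_of_nat])
      (use s in \<open>auto intro!: always_eventually less_imp_le\<close>)
  obtain i0 w0 where "i0 \<in> I" "G i0 x0 = 0" "w0 \<in> subdiff (G i0) x0" "0 \<le> inner w0 e"
    by (rule nonneg_along_ray_imp_active_ascent[OF I Gc Gconv Gle s(1) s_le s0 i nonneg])
  then show False
    using Gact by force
qed

lemma descent_direction:
  fixes h :: "'a::euclidean_space \<Rightarrow> real"
  assumes h: "convex_on UNIV h" and e: "\<forall>w\<in>subdiff h x. inner w e < 0"
  shows "\<exists>\<delta>>0. \<forall>s. 0 < s \<and> s < \<delta> \<longrightarrow> h (x + s *\<^sub>R e) < h x"
proof -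
  have "continuous_on ({0::real} \<times> UNIV) (\<lambda>p. h (snd p) - h x)"
    by (intro continuous_intros continuous_on_compose2[OF convex_on_continuous[OF open_UNIV h]]) auto
  then have "continuous_on ({0::real} \<times> UNIV) (\<lambda>(i, y). h y - h x)"
    by (simp add: case_prod_unfold)
  moreover have "convex_on UNIV (\<lambda>y. h y - h x)"
    using h by (simp add: convex_on_diff concave_on_const)
  ultimately show ?thesis
    using uniform_descent[of "{0::real}" "\<lambda>_ y. h y - h x" x e] e
    by (simp add: subdiff_diff_const)
qed

section \<open>A theorem of the alternative\<close>

lemma convex_cone_hull_positive_combination:
  fixes W :: "'a::real_vector set"
  assumes "v \<in> convex_cone hull W"
  obtains S m where "finite S" "S \<subseteq> W" "\<forall>w\<in>S. 0 < m w" "v = (\<Sum>w\<in>S. m w *\<^sub>R w)"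
proof -
  consider "v = 0" | s z where "0 \<le> s" "z \<in> convex hull W" "v = s *\<^sub>R z"
    using assms by (auto simp: convex_cone_hull_separate conic_hull_explicit)
  then show ?thesis
  proof cases
    case 1
    then show ?thesis
      using that[of "{}"] by simp
  next
    case 2
    then obtain S \<mu> where S: "finite S" "S \<subseteq> W" "\<forall>x\<in>S. 0 \<le> \<mu> x" "(\<Sum>w\<in>S. \<mu> w *\<^sub>R w) = z"
      unfolding convex_hull_explicit by blast
    let ?S = "{w\<in>S. s * \<mu> w \<noteq> 0}"
    have "v = (\<Sum>w\<in>S. (s * \<mu> w) *\<^sub>R w)"
      using 2(3) S(4)[symmetric] by (simp add: scaleR_sum_right)
    also have "\<dots> = (\<Sum>w\<in>?S. (s * \<mu> w) *\<^sub>R w)"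
      using S(1) by (intro sum.mono_neutral_right) auto
    finally show ?thesis
      using that[of ?S "\<lambda>w. s * \<mu> w"] S 2(1) by (force simp: less_le)
  qed
qed

lemma separating_hyperplane_cone_compact:
  fixes K C :: "'a::euclidean_space set"
  assumes K: "closed K" "convex_cone K" and C: "compact C" "convex C" "C \<noteq> {}"
    and disj: "\<forall>v\<in>C. - v \<notin> K"
  obtains d b where "0 < b" "\<forall>v\<in>C. b < inner d v" "\<forall>k\<in>K. 0 \<le> inner d k"
proof -
  define A where "A = (\<Union>k\<in>K. \<Union>v\<in>C. {k + v})"
  have "0 \<notin> A"
  proof
    assume "0 \<in> A"
    then obtain k v where "k \<in> K" "v \<in> C" "k + v = 0"
      unfolding A_def by auto
    then have "- v \<in> K"
      by (metis add.commute neg_eq_iff_add_eq_0)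
    then show False
      using disj \<open>v \<in> C\<close> by blast
  qed
  moreover have "closed A" "convex A"
    unfolding A_def using K C
    by (auto intro: closed_compact_sums convex_sums simp: convex_cone_def)
  ultimately obtain d b where b: "0 < b" and dA: "\<forall>x\<in>A. b < inner d x"
    using separating_hyperplane_closed_0 by blast
  have K0: "0 \<in> K" and Kmul: "\<And>k c. k \<in> K \<Longrightarrow> 0 \<le> c \<Longrightarrow> c *\<^sub>R k \<in> K"
    using K(2) by (auto simp: convex_cone_iff)
  have dC: "\<forall>v\<in>C. b < inner d v"
  proof
    fix v assume "v \<in> C"
    then have "0 + v \<in> A"
      using K0 unfolding A_def by blast
    then show "b < inner d v"
      using dA by simp
  qed
  obtain v0 where v0: "v0 \<in> C"
    using C(3) by blast
  have "0 \<le> inner d k" if k: "k \<in> K" for k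
  proof (rule ccontr)
    assume neg: "\<not> 0 \<le> inner d k"
    define c where "c = (inner d v0 - b) / - inner d k"
    have "0 \<le> c"
      using neg dC v0 unfolding c_def by (intro divide_nonneg_pos) (auto simp: less_imp_le)
    then have "c *\<^sub>R k + v0 \<in> A"
      using Kmul[OF k] v0 unfolding A_def by blast
    moreover have "c * inner d k = b - inner d v0"
      using neg by (simp add: c_def)
    ultimately show False
      using dA by (fastforce simp: inner_add_right)
  qed
  then show ?thesis
    using that b dC by blast
qed

lemma closed_convex_cone_hull_halfspace:
  fixes W :: "'a::euclidean_space set"
  assumes "compact W" and "\<forall>w\<in>W. inner w z < 0"
  shows "closed (convex_cone hull W)"
proof -
  have "convex hull W \<subseteq> {v. inner z v < 0}"
    using assms(2) convex_halfspace_lt[of z 0] by (intro hull_minimal) (auto simp: inner_commute)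
  then have "0 \<notin> convex hull W"
    by auto
  then have "closed (conic hull (convex hull W))"
    using compact_convex_hull[OF assms(1)] by (intro closed_conic_hull) simp
  then show ?thesis
    by (simp add: convex_cone_hull_separate)
qed

lemma gordan_alternative:
  fixes C W :: "'a::euclidean_space set"
  assumes C: "compact C" "convex C" "C \<noteq> {}" and W: "compact W" "\<forall>w\<in>W. inner w z < 0"
    and disj: "\<forall>v\<in>C. - v \<notin> convex_cone hull W"
  shows "\<exists>e. (\<forall>v\<in>C. inner v e < 0) \<and> (\<forall>w\<in>W. inner w e < 0)"
proof -
  obtain d b where b: "0 < b" and dC: "\<forall>v\<in>C. b < inner d v"
    and dK: "\<forall>k\<in>convex_cone hull W. 0 \<le> inner d k"
    by (rule separating_hyperplane_cone_compact[OF closed_convex_cone_hull_halfspace[OF W]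
          convex_cone_convex_cone_hull C disj])
  have dW: "\<forall>w\<in>W. 0 \<le> inner d w"
    using dK hull_subset[of W convex_cone] by blast
  obtain N where N: "0 < N" "\<forall>v\<in>C. norm v \<le> N"
    using compact_imp_bounded[OF C(1)] by (auto simp: bounded_pos)
  \<comment> \<open>Tilting the separating direction \<open>- d\<close> slightly towards \<open>z\<close> makes the
    inequalities on \<open>W\<close> strict and keeps those on \<open>C\<close>.\<close>
  define M where "M = N * (norm z + 1)"
  have M: "0 < M"
    using N(1) by (simp add: M_def add_nonneg_pos)
  define \<theta> where "\<theta> = b / (2 * M)"
  have \<theta>: "0 < \<theta>"
    using b M by (simp add: \<theta>_def)
  have "inner v (\<theta> *\<^sub>R z - d) < 0" if "v \<in> C" for v
  proof -
    have "inner v z \<le> norm v * norm z"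
      by (rule norm_cauchy_schwarz)
    also have "\<dots> \<le> M"
      unfolding M_def using N that by (intro mult_mono) auto
    finally have "\<theta> * inner v z \<le> \<theta> * M"
      using \<theta> by (intro mult_left_mono) auto
    also have "\<dots> = b / 2"
      using M by (simp add: \<theta>_def)
    finally have "\<theta> * inner v z \<le> b / 2" .
    moreover have "b < inner d v"
      using dC that by blast
    ultimately show ?thesis
      using b by (simp add: inner_diff_right inner_commute)
  qed
  moreover have "inner w (\<theta> *\<^sub>R z - d) < 0" if "w \<in> W" for w
  proof -
    have "\<theta> * inner w z < 0" "0 \<le> inner d w"
      using dW W(2) \<theta> that by (simp_all add: mult_pos_neg)
    then show ?thesis
      by (simp add: inner_diff_right inner_commute)
  qed
  ultimately show ?thesis
    by blast
qed

section \<open>KKT multipliers under the Slater condition\<close>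

lemma compact_active_subdiffs:
  fixes g :: "'z::metric_space \<Rightarrow> 'a::euclidean_space \<Rightarrow> real"
  assumes T: "compact T" and gc: "continuous_on (T \<times> UNIV) (\<lambda>(t, x). g t x)"
    and bc: "continuous_on T b"
  shows "compact (\<Union>t\<in>active T g b x. subdiff (g t) x)" (is "compact ?W")
  unfolding compact_eq_seq_compact_metric seq_compact_def
proof (intro allI impI)
  fix w :: "nat \<Rightarrow> 'a"
  assume "\<forall>k. w k \<in> ?W"
  then have "\<forall>k. \<exists>t. t \<in> T \<and> g t x = b t \<and> w k \<in> subdiff (g t) x"
    unfolding active_def by blast
  then obtain t where t: "\<And>k. t k \<in> T" "\<And>k. g (t k) x = b (t k)"
    and w: "\<forall>k. w k \<in> subdiff (g (t k)) x"
    by metis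
  obtain L where L: "\<forall>t\<in>T. \<forall>y\<in>cball x 0. \<forall>w\<in>subdiff (g t) y. norm w \<le> L"
    using subdiff_family_bounded[OF T gc, of x 0] by blast
  have "\<forall>k. norm (w k) \<le> L"
  proof
    fix k
    show "norm (w k) \<le> L"
      using L t(1)[of k] w by simp
  qed
  then obtain t0 w0 r where t0: "t0 \<in> T" and r: "strict_mono r" and tl: "(t \<circ> r) \<longlonglongrightarrow> t0"
    and wl: "(w \<circ> r) \<longlonglongrightarrow> w0" and w0: "w0 \<in> subdiff (g t0) x"
    using subdiff_family_limit[OF T gc allI[OF t(1)] tendsto_const _ w] by blast
  have "(\<lambda>k. g ((t \<circ> r) k) x) \<longlonglongrightarrow> g t0 x"
    using t(1) by (intro tendsto_family_apply[OF gc _ tl t0 tendsto_const]) simp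
  moreover have "(\<lambda>k. b ((t \<circ> r) k)) \<longlonglongrightarrow> b t0"
    using t(1) by (intro continuous_on_tendsto_compose[OF bc tl t0]) simp
  ultimately have "g t0 x = b t0"
    using t(2) LIMSEQ_unique by (simp add: comp_def)
  then have "w0 \<in> ?W"
    using t0 w0 unfolding active_def by blast
  then show "\<exists>l\<in>?W. \<exists>r. strict_mono r \<and> (w \<circ> r) \<longlonglongrightarrow> l"
    using r wl by blast
qed

lemma active_descent_stays_feasible:
  fixes T :: "'z::metric_space set" and g :: "'z \<Rightarrow> 'a::euclidean_space \<Rightarrow> real"
  assumes T: "compact T" and g: "\<forall>t\<in>T. convex_on UNIV (g t)"
    and gc: "continuous_on (T \<times> UNIV) (\<lambda>(t, x). g t x)" and bc: "continuous_on T b"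
    and feas: "x \<in> feas T g b"
    and e: "\<forall>t\<in>active T g b x. \<forall>w\<in>subdiff (g t) x. inner w e < 0"
  shows "\<exists>\<delta>>0. \<forall>s. 0 < s \<and> s < \<delta> \<longrightarrow> x + s *\<^sub>R e \<in> feas T g b"
proof -
  have "continuous_on (T \<times> UNIV) (\<lambda>p. (\<lambda>(t, x). g t x) p - b (fst p))"
    by (intro continuous_on_diff gc continuous_on_compose2[OF bc continuous_on_fst]) auto
  then have "continuous_on (T \<times> UNIV) (\<lambda>(t, x). g t x - b t)"
    by (simp add: case_prod_unfold)
  moreover have "\<forall>t\<in>T. convex_on UNIV (\<lambda>x. g t x - b t)"
    using g by (simp add: convex_on_diff concave_on_const)
  moreover have "\<forall>t\<in>T. g t x - b t \<le> 0"
    using feas unfolding feas_def by simp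
  moreover have "\<forall>t\<in>T. g t x - b t = 0 \<longrightarrow> (\<forall>w\<in>subdiff (\<lambda>x. g t x - b t) x. inner w e < 0)"
    using e unfolding active_def subdiff_diff_const by auto
  ultimately obtain \<delta> where "0 < \<delta>"
    and "\<forall>s. 0 < s \<and> s < \<delta> \<longrightarrow> (\<forall>t\<in>T. g t (x + s *\<^sub>R e) - b t < 0)"
    using uniform_descent[OF T] by blast
  then show ?thesis
    unfolding feas_def by (force intro: less_imp_le)
qed

lemma solset_no_descent_direction:
  fixes T :: "'z::metric_space set" and f :: "'a::euclidean_space \<Rightarrow> real"
  assumes T: "compact T" and f: "convex_on UNIV f" and g: "\<forall>t\<in>T. convex_on UNIV (g t)"
    and gc: "continuous_on (T \<times> UNIV) (\<lambda>(t, x). g t x)" and bc: "continuous_on T b"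
    and sol: "xbar \<in> solset f T g c b"
    and ef: "\<forall>w\<in>subdiff (\<lambda>y. f y + inner c y) xbar. inner w e < 0"
    and eg: "\<forall>t\<in>active T g b xbar. \<forall>w\<in>subdiff (g t) xbar. inner w e < 0"
  shows False
proof -
  have feas: "xbar \<in> feas T g b"
    and opt: "\<forall>y\<in>feas T g b. f xbar + inner c xbar \<le> f y + inner c y"
    using sol unfolding solset_def by auto
  obtain \<delta>1 where "0 < \<delta>1" and \<delta>1: "\<forall>s. 0 < s \<and> s < \<delta>1 \<longrightarrow> xbar + s *\<^sub>R e \<in> feas T g b"
    using active_descent_stays_feasible[OF T g gc bc feas eg] by blast
  have "convex_on UNIV (\<lambda>y. inner c y)"
    unfolding convex_on_def by (simp add: inner_add_right)
  then have "convex_on UNIV (\<lambda>y. f y + inner c y)"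
    using f by (rule convex_on_add[rotated])
  then obtain \<delta>2 where "0 < \<delta>2" and \<delta>2: "\<forall>s. 0 < s \<and> s < \<delta>2 \<longrightarrow>
      f (xbar + s *\<^sub>R e) + inner c (xbar + s *\<^sub>R e) < f xbar + inner c xbar"
    using descent_direction ef by blast
  define s where "s = min \<delta>1 \<delta>2 / 2"
  have "0 < s" "s < \<delta>1" "s < \<delta>2"
    using \<open>0 < \<delta>1\<close> \<open>0 < \<delta>2\<close> by (auto simp: s_def)
  then show False
    using \<delta>1 \<delta>2 opt by force
qed

lemma kkt_cone:
  fixes T :: "'z::metric_space set" and f :: "'a::euclidean_space \<Rightarrow> real"
  assumes T: "compact T" and f: "convex_on UNIV f" and g: "\<forall>t\<in>T. convex_on UNIV (g t)"
    and gc: "continuous_on (T \<times> UNIV) (\<lambda>(t, x). g t x)" and bc: "continuous_on T b"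
    and sol: "xbar \<in> solset f T g c b" and slater: "\<exists>xh. \<forall>t\<in>T. g t xh < b t"
  shows "\<exists>u\<in>subdiff f xbar.
    - (c + u) \<in> convex_cone hull (\<Union>t\<in>active T g b xbar. subdiff (g t) xbar)"
proof (rule ccontr)
  define W where "W = (\<Union>t\<in>active T g b xbar. subdiff (g t) xbar)"
  define C where "C = (+) c ` subdiff f xbar"
  assume "\<not> ?thesis"
  then have disj: "\<forall>v\<in>C. - v \<notin> convex_cone hull W"
    unfolding C_def W_def by blast
  obtain xh where xh: "\<forall>t\<in>T. g t xh < b t"
    using slater by blast
  have "\<forall>w\<in>W. inner w (xh - xbar) < 0"
  proof
    fix w assume "w \<in> W"
    then obtain t where t: "t \<in> T" "g t xbar = b t" "w \<in> subdiff (g t) xbar"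
      unfolding W_def active_def by blast
    then have "g t xbar + inner w (xh - xbar) \<le> g t xh"
      unfolding subdiff_def by blast
    then show "inner w (xh - xbar) < 0"
      using xh t by fastforce
  qed
  moreover have "compact C" "convex C" "C \<noteq> {}"
    unfolding C_def using compact_subdiff[OF f] convex_subdiff subdiff_nonempty[OF f]
    by (auto intro: compact_translation convex_translation)
  moreover have "compact W"
    unfolding W_def by (rule compact_active_subdiffs[OF T gc bc])
  ultimately obtain e where eC: "\<forall>v\<in>C. inner v e < 0" and eW: "\<forall>w\<in>W. inner w e < 0"
    using gordan_alternative[OF _ _ _ _ _ disj] by blast
  have "\<forall>w\<in>subdiff (\<lambda>y. f y + inner c y) xbar. inner w e < 0"
  proof
    fix w assume "w \<in> subdiff (\<lambda>y. f y + inner c y) xbar"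
    then have "c + (w - c) \<in> C"
      unfolding C_def subdiff_add_inner by blast
    then show "inner w e < 0"
      using eC by simp
  qed
  moreover have "\<forall>t\<in>active T g b xbar. \<forall>w\<in>subdiff (g t) xbar. inner w e < 0"
    using eW unfolding W_def by blast
  ultimately show False
    by (rule solset_no_descent_direction[OF T f g gc bc sol])
qed

lemma subdiff_sum_regroup:
  fixes S :: "'a::real_inner set" and \<iota> :: "'a \<Rightarrow> 'z"
  assumes S: "finite S" and m: "\<forall>w\<in>S. 0 < m w" and sub: "\<forall>w\<in>S. w \<in> subdiff (h (\<iota> w)) x"
  obtains \<gamma> u where "\<forall>t\<in>\<iota> ` S. 0 < \<gamma> t \<and> u t \<in> subdiff (h t) x"
    "(\<Sum>t\<in>\<iota> ` S. \<gamma> t *\<^sub>R u t) = (\<Sum>w\<in>S. m w *\<^sub>R w)"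
proof -
  define \<gamma> where "\<gamma> t = (\<Sum>w\<in>{w\<in>S. \<iota> w = t}. m w)" for t
  define u where "u t = (\<Sum>w\<in>{w\<in>S. \<iota> w = t}. (m w / \<gamma> t) *\<^sub>R w)" for t
  have \<gamma>: "0 < \<gamma> t" if "t \<in> \<iota> ` S" for t
    unfolding \<gamma>_def using S m that by (intro sum_pos) auto
  have "u t \<in> subdiff (h t) x" if "t \<in> \<iota> ` S" for t
    unfolding u_def
  proof (rule convex_sum[OF _ convex_subdiff])
    show "(\<Sum>w\<in>{w\<in>S. \<iota> w = t}. m w / \<gamma> t) = 1"
      using \<gamma>[OF that] by (simp add: \<gamma>_def sum_divide_distrib[symmetric])
  qed (use S m sub \<gamma>[OF that] in auto)
  moreover have "(\<Sum>t\<in>\<iota> ` S. \<gamma> t *\<^sub>R u t) = (\<Sum>w\<in>S. m w *\<^sub>R w)"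
  proof -
    have "\<gamma> t *\<^sub>R u t = (\<Sum>w\<in>{w\<in>S. \<iota> w = t}. m w *\<^sub>R w)" if "t \<in> \<iota> ` S" for t
      using \<gamma>[OF that] by (simp add: u_def scaleR_sum_right)
    then have "(\<Sum>t\<in>\<iota> ` S. \<gamma> t *\<^sub>R u t) = (\<Sum>t\<in>\<iota> ` S. \<Sum>w\<in>{w\<in>S. \<iota> w = t}. m w *\<^sub>R w)"
      by (rule sum.cong[OF refl])
    also have "\<dots> = (\<Sum>w\<in>S. m w *\<^sub>R w)"
      by (rule sum.group) (use S in auto)
    finally show ?thesis .
  qed
  ultimately show ?thesis
    using that \<gamma> by blast
qed

lemma kkt_multipliers:
  fixes T :: "'z::metric_space set" and f :: "'a::euclidean_space \<Rightarrow> real"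
  assumes T: "compact T" and f: "convex_on UNIV f" and g: "\<forall>t\<in>T. convex_on UNIV (g t)"
    and gc: "continuous_on (T \<times> UNIV) (\<lambda>(t, x). g t x)" and bc: "continuous_on T b"
    and sol: "xbar \<in> solset f T g c b" and slater: "\<exists>xh. \<forall>t\<in>T. g t xh < b t"
  obtains T0 \<gamma> ut u where "finite T0" "T0 \<subseteq> active T g b xbar"
    "\<forall>t\<in>T0. 0 < \<gamma> t \<and> ut t \<in> subdiff (g t) xbar" "u \<in> subdiff f xbar"
    "- (c + u) = (\<Sum>t\<in>T0. \<gamma> t *\<^sub>R ut t)"
proof -
  obtain u where u: "u \<in> subdiff f xbar"
    and cone: "- (c + u) \<in> convex_cone hull (\<Union>t\<in>active T g b xbar. subdiff (g t) xbar)"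
    using kkt_cone[OF T f g gc bc sol slater] by blast
  obtain S m where S: "finite S" "S \<subseteq> (\<Union>t\<in>active T g b xbar. subdiff (g t) xbar)"
    and m: "\<forall>w\<in>S. 0 < m w" and eq: "- (c + u) = (\<Sum>w\<in>S. m w *\<^sub>R w)"
    using cone by (rule convex_cone_hull_positive_combination)
  have "\<forall>w\<in>S. \<exists>t. t \<in> active T g b xbar \<and> w \<in> subdiff (g t) xbar"
    using S(2) by blast
  then obtain \<iota> where \<iota>: "\<forall>w\<in>S. \<iota> w \<in> active T g b xbar \<and> w \<in> subdiff (g (\<iota> w)) xbar"
    by (rule bchoice[elim_format]) blast
  obtain \<gamma> ut where \<gamma>: "\<forall>t\<in>\<iota> ` S. 0 < \<gamma> t \<and> ut t \<in> subdiff (g t) xbar"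
    and sum: "(\<Sum>t\<in>\<iota> ` S. \<gamma> t *\<^sub>R ut t) = (\<Sum>w\<in>S. m w *\<^sub>R w)"
    using subdiff_sum_regroup[OF S(1) m, of g \<iota> xbar] \<iota> by blast
  show ?thesis
  proof (rule that[OF _ _ \<gamma> u])
    show "finite (\<iota> ` S)" "\<iota> ` S \<subseteq> active T g b xbar"
      using S(1) \<iota> by auto
    show "- (c + u) = (\<Sum>t\<in>\<iota> ` S. \<gamma> t *\<^sub>R ut t)"
      using eq sum by simp
  qed
qed

lemma weighted_slack_bound:
  fixes \<gamma> D :: "'z \<Rightarrow> real"
  assumes T0: "finite T0" and t: "t \<in> T0" and \<gamma>: "\<forall>s\<in>T0. 0 < \<gamma> s"
    and D: "\<forall>s\<in>T0. - \<rho> \<le> D s" and sum: "(\<Sum>s\<in>T0. \<gamma> s * D s) \<le> \<rho>" and \<rho>: "0 \<le> \<rho>"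
  shows "D t \<le> (1 + sum \<gamma> T0) * (1 + (\<Sum>s\<in>T0. 1 / \<gamma> s)) * \<rho>"
proof -
  have "- \<rho> * sum \<gamma> T0 \<le> - \<rho> * (\<Sum>s\<in>T0 - {t}. \<gamma> s)"
    using T0 \<gamma> \<rho> by (intro mult_left_mono_neg sum_mono2) auto
  also have "\<dots> = (\<Sum>s\<in>T0 - {t}. \<gamma> s * - \<rho>)"
    by (simp add: sum_distrib_left mult.commute)
  also have "\<dots> \<le> (\<Sum>s\<in>T0 - {t}. \<gamma> s * D s)"
    using \<gamma> D by (intro sum_mono mult_left_mono) auto
  also have "\<dots> = (\<Sum>s\<in>T0. \<gamma> s * D s) - \<gamma> t * D t"
    using sum_diff1[OF T0, of "\<lambda>s. \<gamma> s * D s" t] t by simp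
  finally have "\<gamma> t * D t \<le> (1 + sum \<gamma> T0) * \<rho>"
    using sum by (simp add: algebra_simps)
  then have "D t \<le> (1 + sum \<gamma> T0) * \<rho> * (1 / \<gamma> t)"
    using \<gamma> t by (simp add: field_simps)
  also have "\<dots> \<le> (1 + sum \<gamma> T0) * \<rho> * (1 + (\<Sum>s\<in>T0. 1 / \<gamma> s))"
    using T0 t \<gamma> \<rho> member_le_sum[of t T0 "\<lambda>s. 1 / \<gamma> s"]
    by (intro mult_left_mono mult_nonneg_nonneg sum_nonneg add_nonneg_nonneg) (auto simp: less_imp_le)
  finally show ?thesis
    by (simp add: algebra_simps)
qed

lemma kkt_weighted_slack_le:
  fixes f :: "'a::real_inner \<Rightarrow> real"
  assumes T0: "T0 \<subseteq> active T g b xbar"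
    and mult: "\<forall>t\<in>T0. 0 < \<gamma> t \<and> ut t \<in> subdiff (g t) xbar" and u: "u \<in> subdiff f xbar"
    and eq: "- (c + u) = (\<Sum>t\<in>T0. \<gamma> t *\<^sub>R ut t)"
    and obj: "f x + inner c x \<le> f xbar + inner c xbar + \<rho>"
  shows "(\<Sum>t\<in>T0. \<gamma> t * (b t - g t x)) \<le> \<rho>"
proof -
  have "f xbar + inner u (x - xbar) \<le> f x"
    using u unfolding subdiff_def by blast
  then have "- inner c (x - xbar) - (f x - f xbar) \<le> - inner c (x - xbar) - inner u (x - xbar)"
    by linarith
  also have "\<dots> = (\<Sum>t\<in>T0. \<gamma> t * inner (ut t) (x - xbar))"
    using arg_cong[OF eq, of "\<lambda>v. inner v (x - xbar)"]
    by (simp add: inner_sum_left inner_diff_left)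
  also have "\<dots> \<le> (\<Sum>t\<in>T0. \<gamma> t * (g t x - b t))"
  proof (rule sum_mono)
    fix t assume t: "t \<in> T0"
    then have "g t xbar + inner (ut t) (x - xbar) \<le> g t x"
      using mult unfolding subdiff_def by blast
    moreover have "g t xbar = b t"
      using T0 t unfolding active_def by blast
    ultimately show "\<gamma> t * inner (ut t) (x - xbar) \<le> \<gamma> t * (g t x - b t)"
      using mult t by (simp add: less_imp_le)
  qed
  also have "\<dots> = - (\<Sum>t\<in>T0. \<gamma> t * (b t - g t x))"
    by (simp add: sum_negf[symmetric] algebra_simps)
  finally show ?thesis
    using obj by (simp add: inner_diff_right)
qed

lemma kkt_slack_bound:
  fixes f :: "'a::real_inner \<Rightarrow> real"
  assumes T0: "finite T0" "T0 \<subseteq> active T g b xbar"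
    and mult: "\<forall>t\<in>T0. 0 < \<gamma> t \<and> ut t \<in> subdiff (g t) xbar" and u: "u \<in> subdiff f xbar"
    and eq: "- (c + u) = (\<Sum>t\<in>T0. \<gamma> t *\<^sub>R ut t)"
  obtains K where "1 \<le> K"
    "\<And>x \<rho> t. f x + inner c x \<le> f xbar + inner c xbar + \<rho> \<Longrightarrow> \<forall>s\<in>T0. g s x \<le> b s + \<rho> \<Longrightarrow>
      0 \<le> \<rho> \<Longrightarrow> t \<in> T0 \<Longrightarrow> b t - g t x \<le> K * \<rho>"
proof -
  define K where "K = (1 + sum \<gamma> T0) * (1 + (\<Sum>s\<in>T0. 1 / \<gamma> s))"
  have "0 \<le> sum \<gamma> T0" "0 \<le> (\<Sum>s\<in>T0. 1 / \<gamma> s)"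
    using mult by (auto intro!: sum_nonneg simp: less_imp_le)
  then have "1 \<le> K"
    unfolding K_def using mult_mono[of 1 "1 + sum \<gamma> T0" 1 "1 + (\<Sum>s\<in>T0. 1 / \<gamma> s)"] by simp
  moreover have "b t - g t x \<le> K * \<rho>"
    if obj: "f x + inner c x \<le> f xbar + inner c xbar + \<rho>" and cons: "\<forall>s\<in>T0. g s x \<le> b s + \<rho>"
      and "0 \<le> \<rho>" "t \<in> T0" for x \<rho> t
    unfolding K_def
  proof (rule weighted_slack_bound[OF T0(1) \<open>t \<in> T0\<close> _ _ kkt_weighted_slack_le[OF T0(2) mult u eq obj]])
    show "\<forall>s\<in>T0. - \<rho> \<le> b s - g s x"
      using cons by force
  qed (use mult \<open>0 \<le> \<rho>\<close> in auto)
  ultimately show ?thesis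
    using that by blast
qed

section \<open>Perturbing the right-hand side\<close>

lemma supdist_bdd_above:
  fixes b b' :: "'a::topological_space \<Rightarrow> real"
  assumes "compact T" "continuous_on T b" "continuous_on T b'"
  shows "bdd_above (insert 0 ((\<lambda>t. \<bar>b t - b' t\<bar>) ` T))"
proof -
  have "continuous_on T (\<lambda>t. \<bar>b t - b' t\<bar>)"
    using continuous_on_rabs[OF continuous_on_diff[OF assms(2,3)]] .
  then have "compact ((\<lambda>t. \<bar>b t - b' t\<bar>) ` T)"
    using assms(1) by (simp add: compact_continuous_image)
  then show ?thesis
    by (simp add: bounded_imp_bdd_above compact_imp_bounded)
qed

lemma abs_le_supdist:
  assumes "compact T" "continuous_on T b" "continuous_on T b'" "t \<in> T"
  shows "\<bar>b t - b' t\<bar> \<le> supdist T b b'"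
  unfolding supdist_def using assms(4) by (intro cSup_upper supdist_bdd_above[OF assms(1-3)]) auto

lemma supdist_nonneg:
  assumes "compact T" "continuous_on T b" "continuous_on T b'"
  shows "0 \<le> supdist T b b'"
  unfolding supdist_def by (intro cSup_upper supdist_bdd_above[OF assms]) auto

lemma supdist_le:
  assumes "\<forall>t\<in>T. \<bar>b t - b' t\<bar> \<le> M" and "0 \<le> M"
  shows "supdist T b b' \<le> M"
  unfolding supdist_def using assms by (intro cSup_least) auto

lemma truncated_rhs:
  fixes g :: "'z::metric_space \<Rightarrow> 'a::topological_space \<Rightarrow> real"
  assumes gc: "continuous_on (T \<times> UNIV) (\<lambda>(t, x). g t x)" and bc: "continuous_on T b"
    and K: "1 \<le> K" and \<rho>: "0 \<le> \<rho>" and near: "\<forall>t\<in>T. g t x \<le> b t + \<rho>"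
    and T0: "T0 \<subseteq> T" "\<forall>t\<in>T0. b t - g t x \<le> K * \<rho>"
  defines "b' \<equiv> \<lambda>t. max (g t x) (b t - K * \<rho>)"
  shows "continuous_on T b'" "x \<in> feas T g b'" "T0 \<subseteq> active T g b' x"
    "supdist T b' b \<le> K * \<rho>"
proof -
  have "continuous_on T (\<lambda>t. g t x)"
    using continuous_on_compose2[OF gc continuous_on_Pair[OF continuous_on_id continuous_on_const]]
    by force
  then show "continuous_on T b'"
    unfolding b'_def by (intro continuous_on_max continuous_on_diff bc continuous_on_const)
  show "x \<in> feas T g b'"
    unfolding feas_def b'_def by simp
  show "T0 \<subseteq> active T g b' x"
    using T0 unfolding active_def b'_def by force
  have "\<rho> \<le> K * \<rho>"
    using K \<rho> by (simp add: mult_le_cancel_right1)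
  then show "supdist T b' b \<le> K * \<rho>"
    using near K \<rho> unfolding b'_def by (intro supdist_le) (auto simp: abs_le_iff)
qed

lemma tendsto_zero_of_le_inverse:
  fixes a :: "nat \<Rightarrow> real"
  assumes "\<forall>k. 0 \<le> a k" "\<forall>k. a k \<le> C * inverse (Suc k)"
  shows "a \<longlonglongrightarrow> 0"
  by (rule real_tendsto_sandwich[OF _ _ tendsto_const tendsto_mult_right_zero[OF LIMSEQ_inverse_real_of_nat, of C]])
    (use assms in simp_all)

lemma truncated_rhs_sequence:
  fixes g :: "'z::metric_space \<Rightarrow> 'a::topological_space \<Rightarrow> real" and X :: "nat \<Rightarrow> 'a"
  assumes T: "compact T" and gc: "continuous_on (T \<times> UNIV) (\<lambda>(t, x). g t x)"
    and bc: "continuous_on T b" and K: "1 \<le> K" and q: "0 < q"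
    and \<rho>: "\<And>k. 0 \<le> \<rho> k" "\<And>k. \<rho> k < inverse (Suc k)"
    and near: "\<And>k. \<forall>t\<in>T. g t (X k) \<le> b t + \<rho> k"
    and T0: "T0 \<subseteq> T" and slack: "\<And>k. \<forall>t\<in>T0. b t - g t (X k) \<le> K * \<rho> k"
    and d: "\<And>k. 0 < d k" and far: "\<And>k. \<rho> k powr q < inverse (Suc k) * d k"
  obtains br where "\<And>k. continuous_on T (br k)" "\<And>k. X k \<in> feas T g (br k)"
    "\<And>k. T0 \<subseteq> active T g (br k) (X k)" "(\<lambda>k. supdist T (br k) b) \<longlonglongrightarrow> 0"
    "(\<lambda>k. supdist T (br k) b powr q / d k) \<longlonglongrightarrow> 0"
proof -
  define br where "br k t = max (g t (X k)) (b t - K * \<rho> k)" for k t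
  have br: "continuous_on T (br k)" "X k \<in> feas T g (br k)" "T0 \<subseteq> active T g (br k) (X k)"
    and dist_br: "0 \<le> supdist T (br k) b" "supdist T (br k) b \<le> K * \<rho> k" for k
    using truncated_rhs[OF gc bc K \<rho>(1) near T0 slack] supdist_nonneg[OF T _ bc]
    unfolding br_def by auto
  have "supdist T (br k) b \<le> K * inverse (Suc k)" for k
  proof -
    have "K * \<rho> k \<le> K * inverse (Suc k)"
      using K \<rho>(2)[of k] by (intro mult_left_mono) auto
    then show ?thesis
      using dist_br(2)[of k] by linarith
  qed
  then have lim_supdist: "(\<lambda>k. supdist T (br k) b) \<longlonglongrightarrow> 0"
    using dist_br(1) by (intro tendsto_zero_of_le_inverse) auto
  have "supdist T (br k) b powr q / d k \<le> K powr q * inverse (Suc k)" for k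
  proof -
    have "supdist T (br k) b powr q \<le> (K * \<rho> k) powr q"
      using dist_br[of k] q by (intro powr_mono2) auto
    also have "\<dots> \<le> K powr q * (inverse (Suc k) * d k)"
      using far[of k] unfolding powr_mult by (intro mult_left_mono) auto
    finally show ?thesis
      using d[of k] by (simp add: divide_le_eq mult.assoc)
  qed
  then have "(\<lambda>k. supdist T (br k) b powr q / d k) \<longlonglongrightarrow> 0"
    using d by (intro tendsto_zero_of_le_inverse) (auto simp: less_imp_le)
  with br lim_supdist show ?thesis
    by (rule that)
qed

section \<open>Sequences from the failure of calmness\<close>

lemma levelmap_at_optimal_value:
  assumes "xbar \<in> solset f T g c b"
  shows "levelmap f T g c (f xbar + inner c xbar, b) = solset f T g c b"
  using assms unfolding levelmap_def solset_def by (auto intro: order_trans)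

lemma levelmap_pdist_bounds:
  assumes T: "compact T" and y: "continuous_on T (snd y)" and b: "continuous_on T b"
    and x: "x \<in> levelmap f T g c y"
  shows "f x + inner c x \<le> \<alpha> + pdist T y (\<alpha>, b)" "\<forall>t\<in>T. g t x \<le> b t + pdist T y (\<alpha>, b)"
proof -
  show "f x + inner c x \<le> \<alpha> + pdist T y (\<alpha>, b)"
    using x unfolding levelmap_def pdist_def by auto
  show "\<forall>t\<in>T. g t x \<le> b t + pdist T y (\<alpha>, b)"
  proof
    fix t assume t: "t \<in> T"
    then have "\<bar>snd y t - b t\<bar> \<le> pdist T y (\<alpha>, b)"
      using abs_le_supdist[OF T y b t] unfolding pdist_def by simp
    then show "g t x \<le> b t + pdist T y (\<alpha>, b)"
      using x t unfolding levelmap_def feas_def by auto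
  qed
qed

lemma not_q_calm_sequences:
  assumes "\<not> q_calm Ydom dY S q ybar xbar"
  obtains Y X where "\<And>k. Y k \<in> Ydom" "\<And>k. dY (Y k) ybar < inverse (Suc k)"
    "\<And>k. X k \<in> S (Y k)" "\<And>k. dist (X k) xbar < inverse (Suc k)"
    "\<And>k. dY (Y k) ybar powr q < inverse (Suc k) * infdist (X k) (S ybar)"
proof -
  have "\<exists>y x. y \<in> Ydom \<and> dY y ybar < \<epsilon> \<and> x \<in> S y \<and> dist x xbar < \<epsilon>
      \<and> dY y ybar powr q < \<epsilon> * infdist x (S ybar)" if "0 < \<epsilon>" for \<epsilon>
  proof (rule ccontr)
    assume "\<not> ?thesis"
    then have "\<forall>y\<in>Ydom. dY y ybar < \<epsilon> \<longrightarrow>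
        (\<forall>x\<in>S y \<inter> ball xbar \<epsilon>. \<epsilon> * infdist x (S ybar) \<le> dY y ybar powr q)"
      by (fastforce simp: not_less dist_commute)
    then have "q_calm Ydom dY S q ybar xbar"
      unfolding q_calm_def using that by (intro exI[of _ \<epsilon>] exI[of _ "ball xbar \<epsilon>"] conjI) auto
    then show False
      using assms by blast
  qed
  then have "\<forall>k. \<exists>y x. y \<in> Ydom \<and> dY y ybar < inverse (Suc k) \<and> x \<in> S y
      \<and> dist x xbar < inverse (Suc k) \<and> dY y ybar powr q < inverse (Suc k) * infdist x (S ybar)"
    by simp
  then obtain Y X where "\<And>k. Y k \<in> Ydom \<and> dY (Y k) ybar < inverse (Suc k) \<and> X k \<in> S (Y k)
      \<and> dist (X k) xbar < inverse (Suc k)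
      \<and> dY (Y k) ybar powr q < inverse (Suc k) * infdist (X k) (S ybar)"
    by metis
  then show ?thesis
    by (intro that) auto
qed

lemma not_calm_levelmap_sequences:
  fixes T :: "'z::metric_space set" and f :: "'a::real_inner \<Rightarrow> real"
  assumes T: "compact T" and bc: "continuous_on T b" and sol: "xbar \<in> solset f T g c b"
    and not_calm: "\<not> q_calm {p. continuous_on T (snd p)} (pdist T) (levelmap f T g c) q
      (f xbar + inner c xbar, b) xbar"
  obtains X \<rho> where "X \<longlonglongrightarrow> xbar" "\<And>k. 0 \<le> \<rho> k" "\<And>k. \<rho> k < inverse (Suc k)"
    "\<And>k. f (X k) + inner c (X k) \<le> f xbar + inner c xbar + \<rho> k"
    "\<And>k. \<forall>t\<in>T. g t (X k) \<le> b t + \<rho> k"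
    "\<And>k. 0 < infdist (X k) (solset f T g c b)"
    "\<And>k. \<rho> k powr q < inverse (Suc k) * infdist (X k) (solset f T g c b)"
proof -
  define ybar where "ybar = (f xbar + inner c xbar, b)"
  have L: "levelmap f T g c ybar = solset f T g c b"
    unfolding ybar_def by (rule levelmap_at_optimal_value[OF sol])
  obtain Y X where Y: "\<And>k. Y k \<in> {p. continuous_on T (snd p)}"
    "\<And>k. pdist T (Y k) ybar < inverse (Suc k)"
    and X: "\<And>k. X k \<in> levelmap f T g c (Y k)" "\<And>k. dist (X k) xbar < inverse (Suc k)"
    and far: "\<And>k. pdist T (Y k) ybar powr q < inverse (Suc k) * infdist (X k) (solset f T g c b)"
    using not_q_calm_sequences[OF not_calm[folded ybar_def]] unfolding L by blast
  show ?thesis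
  proof (rule that[of X "\<lambda>k. pdist T (Y k) ybar"])
    have "(\<lambda>k. dist (X k) xbar) \<longlonglongrightarrow> 0"
      using X(2) by (intro tendsto_zero_of_le_inverse[of _ 1]) (auto simp: less_imp_le)
    then show "X \<longlonglongrightarrow> xbar"
      by (rule tendsto_dist_iff[THEN iffD2])
    show "0 \<le> pdist T (Y k) ybar" for k
      by (simp add: pdist_def)
    show "pdist T (Y k) ybar < inverse (Suc k)" for k
      by (rule Y(2))
    show "f (X k) + inner c (X k) \<le> f xbar + inner c xbar + pdist T (Y k) ybar"
      and "\<forall>t\<in>T. g t (X k) \<le> b t + pdist T (Y k) ybar" for k
      using levelmap_pdist_bounds[OF T _ bc X(1)] Y(1) unfolding ybar_def by auto
    show "0 < infdist (X k) (solset f T g c b)" for k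
    proof -
      have "0 < inverse (Suc k) * infdist (X k) (solset f T g c b)"
        using far[of k] powr_ge_zero[of "pdist T (Y k) ybar" q] by linarith
      then show ?thesis
        by (simp add: zero_less_mult_iff)
    qed
  qed (rule far)
qed

theorem proposition4p5:
  fixes T :: "'z::metric_space set"
    and f :: "'a::euclidean_space \<Rightarrow> real"
    and g :: "'z \<Rightarrow> 'a \<Rightarrow> real"
    and cbar xbar :: 'a
    and bbar :: "'z \<Rightarrow> real"
    and q :: real
  assumes T: "compact T" "T \<noteq> UNIV"
    and f_convex: "convex_on UNIV f"
    and g_convex: "\<forall>t\<in>T. convex_on UNIV (g t)"
    and g_cont: "continuous_on (T \<times> UNIV) (\<lambda>(t, x). g t x)"
    and q: "0 < q" "q \<le> 1"
    and bbar_cont: "continuous_on T bbar"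
    and gph: "xbar \<in> solset f T g cbar bbar"
    and slater: "\<exists>xh. \<forall>t\<in>T. g t xh < bbar t"
    and not_calm: "\<not> q_calm {p. continuous_on T (snd p)} (pdist T) (levelmap f T g cbar) q
                       (f xbar + inner cbar xbar, bbar) xbar"
  shows "\<exists>(xr :: nat \<Rightarrow> 'a) (br :: nat \<Rightarrow> 'z \<Rightarrow> real).
           (\<forall>r. continuous_on T (br r)) \<and>
           xr \<longlonglongrightarrow> xbar \<and>
           (\<lambda>r. supdist T (br r) bbar) \<longlonglongrightarrow> 0 \<and>
           (\<forall>r. xr r \<in> feas T g (br r)) \<and>
           (\<forall>r. 0 < infdist (xr r) (solset f T g cbar bbar)) \<and>
           (\<lambda>r. supdist T (br r) bbar powr q / infdist (xr r) (solset f T g cbar bbar))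
              \<longlonglongrightarrow> 0 \<and>
           (\<exists>T0 (\<gamma> :: 'z \<Rightarrow> real) (ut :: 'z \<Rightarrow> 'a) u.
              finite T0 \<and> T0 \<subseteq> T \<and> (\<forall>r. T0 \<subseteq> active T g (br r) (xr r)) \<and>
              (\<forall>t\<in>T0. 0 < \<gamma> t \<and> ut t \<in> subdiff (g t) xbar) \<and>
              u \<in> subdiff f xbar \<and>
              - (cbar + u) = (\<Sum>t\<in>T0. \<gamma> t *\<^sub>R ut t))"
proof -
  obtain X \<rho> where X: "X \<longlonglongrightarrow> xbar" and \<rho>: "\<And>k. 0 \<le> \<rho> k" "\<And>k. \<rho> k < inverse (Suc k)"
    and obj: "\<And>k. f (X k) + inner cbar (X k) \<le> f xbar + inner cbar xbar + \<rho> k"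
    and near: "\<And>k. \<forall>t\<in>T. g t (X k) \<le> bbar t + \<rho> k"
    and dist_Sol: "\<And>k. 0 < infdist (X k) (solset f T g cbar bbar)"
    and far: "\<And>k. \<rho> k powr q < inverse (Suc k) * infdist (X k) (solset f T g cbar bbar)"
    using not_calm_levelmap_sequences[OF T(1) bbar_cont gph not_calm] by blast
  obtain T0 \<gamma> ut u where T0: "finite T0" "T0 \<subseteq> active T g bbar xbar"
    and mult: "\<forall>t\<in>T0. 0 < \<gamma> t \<and> ut t \<in> subdiff (g t) xbar" and u: "u \<in> subdiff f xbar"
    and eq: "- (cbar + u) = (\<Sum>t\<in>T0. \<gamma> t *\<^sub>R ut t)"
    by (rule kkt_multipliers[OF T(1) f_convex g_convex g_cont bbar_cont gph slater])
  obtain K where K: "1 \<le> K" and slack: "\<And>x \<rho> t. f x + inner cbar x \<le> f xbar + inner cbar xbar + \<rho> \<Longrightarrow>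
      \<forall>s\<in>T0. g s x \<le> bbar s + \<rho> \<Longrightarrow> 0 \<le> \<rho> \<Longrightarrow> t \<in> T0 \<Longrightarrow> bbar t - g t x \<le> K * \<rho>"
    using kkt_slack_bound[OF T0 mult u eq] by blast
  have "T0 \<subseteq> T"
    using T0(2) unfolding active_def by blast
  then have "\<forall>t\<in>T0. bbar t - g t (X k) \<le> K * \<rho> k" for k
    using slack[OF obj] near \<rho>(1) by blast
  then obtain br where "\<And>k. continuous_on T (br k)" "\<And>k. X k \<in> feas T g (br k)"
    "\<And>k. T0 \<subseteq> active T g (br k) (X k)" "(\<lambda>k. supdist T (br k) bbar) \<longlonglongrightarrow> 0"
    "(\<lambda>k. supdist T (br k) bbar powr q / infdist (X k) (solset f T g cbar bbar)) \<longlonglongrightarrow> 0"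
    using truncated_rhs_sequence[OF T(1) g_cont bbar_cont K q(1) \<rho> near \<open>T0 \<subseteq> T\<close> _ dist_Sol far]
    by blast
  then show ?thesis
    using X dist_Sol T0(1) \<open>T0 \<subseteq> T\<close> mult u eq
    by (intro exI[of _ X] exI[of _ br] conjI exI[of _ T0] exI[of _ \<gamma>] exI[of _ ut] exI[of _ u]) auto
qed

end
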